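(* Algorithm $\mathsf{NG}$ (described in the context) does not satisfy the common core property. That is, it is not the case that for every finite set of processes $\mathcal{P}$, every asymmetric fail-prone system $\mathbb{F}$ on $\mathcal{P}$, every asymmetric Byzantine quorum system $\mathbb{Q}$ for $\mathbb{F}$, and every execution of $\mathsf{NG}$ with a guild, there exists a set $S^+$ consisting of the values ag-proposed by the members of some quorum $Q_i\in\mathcal{Q}_i$ of some process $p_i$ in the maximal guild, such that $S^+\subseteq U$ for every set $U$ ag-delivered by a process of the maximal guild.
   Context: System model: a finite set $\mathcal{P}=\{p_1,\dots,p_n\}$ of processes communicating asynchronously over authenticated point-to-point links; every message sent from a correct process to a correct process is eventually delivered. A process that follows its protocol is correct; others (faulty, Byzantine) may behave arbitrarily. $F\subseteq\mathcal{P}$ denotes the (unknown) set of faulty processes of an execution. For $\mathcal{A}\subseteq 2^{\mathcal{P}}$, write $\mathcal{A}^*=\{A' : A'\subseteq A,\ A\in\mathcal{A}\}$. An asymmetric fail-prone system is an array $\mathbb{F}=[\mathcal{F}_1,\dots,\mathcal{F}_n]$ with $\mathcal{F}_i\subseteq 2^{\mathcal{P}}$. An asymmetric Byzantine quorum system for $\mathbb{F}$ is an array $\mathbb{Q}=[\mathcal{Q}_1,\dots,\mathcal{Q}_n]$ with $\mathcal{Q}_i\subseteq 2^{\mathcal{P}}$ (elements of $\mathcal{Q}_i$ are called quorums for $p_i$) satisfying: (consistency) for all $i,j$, all $Q_i\in\mathcal{Q}_i$, $Q_j\in\mathcal{Q}_j$ and all $F_{ij}\in\mathcal{F}_i^*\cap\mathcal{F}_j^*$,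 $Q_i\cap Q_j\not\subseteq F_{ij}$; (availability) for all $i$ and all $F_i\in\mathcal{F}_i$ there is $Q_i\in\mathcal{Q}_i$ with $F_i\cap Q_i=\emptyset$. A correct process $p_i$ is wise if $F\in\mathcal{F}_i^*$ and naive otherwise. A guild is a set $\mathcal{G}$ of wise processes such that every $p_i\in\mathcal{G}$ has some $Q_i\in\mathcal{Q}_i$ with $Q_i\subseteq\mathcal{G}$. An execution with a guild is one in which a nonempty guild exists; the maximal guild is the union of all guilds. Asymmetric reliable broadcast (interface arb-broadcast / arb-deliver) is a primitive which, in every execution with a guild, guarantees: if a correct process arb-broadcasts $m$, every process of the maximal guild eventually arb-delivers $m$; for each sender, all processes of the maximal guild that arb-deliver a message from it arb-deliver the same message; if some process of the maximal guild arb-delivers a message from a sender, every process of the maximal guild eventually arb-delivers a message from that sender; a correct process arb-delivers at most one message per sender, and if the sender is correct, only a message it arb-broadcast. Algorithm $\mathsf{NG}$ (code of process $p_i$; each correct process invokes ag-propose$(x_i)$ exactly once; each guarded action "upon there being ..." is executed at most once). State: sets $S_i,T_i,U_i$, initially empty. (1) Upon ag-propose$(x_i)$: arb-broadcast $(p_i,x_i)$. (2) Upon arb-delivering $(p_j,x_j)$ from $p_j$: $S_i\gets S_i\cup\{(p_j,x_j)\}$. (3) Upon there being $Q\in\mathcal{Q}_i$ such that $p_i$ has arb-delivered from every member of $Q$: send $\langle\mathrm{DistributeS},p_i,S_i\rangle$ to all processes. (4) Upon receiving $\langle\mathrm{DistributeS},p_j,S_j\rangle$: $T_i\gets T_i\cup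 S_j$. (5) Upon there being $Q\in\mathcal{Q}_i$ such that a DistributeS message was received from every member of $Q$: send $\langle\mathrm{DistributeT},p_i,T_i\rangle$ to all processes. (6) Upon receiving $\langle\mathrm{DistributeT},p_j,T_j\rangle$ from $p_j$: $U_i\gets U_i\cup T_j$. (7) Upon there being $Q\in\mathcal{Q}_i$ such that a DistributeT message was received from every member of $Q$: ag-deliver$(U_i)$. Common core property (of a protocol with interface ag-propose/ag-deliver): in any execution with a guild, there exists a set $S^+$ composed of the values ag-proposed by the processes of some quorum $Q_i\in\mathcal{Q}_i$ of some process $p_i$ in the maximal guild, such that every process of the maximal guild that ag-delivers a set $U$ has $S^+\subseteq U$. *)

theory Defs
  imports Main
begin

definition downclose :: "'a set set \<Rightarrow> 'a set set" where
  "downclose A = {A'. \<exists>B\<in>A. A' \<subseteq> B}"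

definition fail_prone :: "nat set \<Rightarrow> (nat \<Rightarrow> nat set set) \<Rightarrow> bool" where
  "fail_prone P Fs \<longleftrightarrow> (\<forall>i\<in>P. \<forall>F\<in>Fs i. F \<subseteq> P)"

definition byz_quorum_system ::
  "nat set \<Rightarrow> (nat \<Rightarrow> nat set set) \<Rightarrow> (nat \<Rightarrow> nat set set) \<Rightarrow> bool" where
  "byz_quorum_system P Fs Qs \<longleftrightarrow>
     (\<forall>i\<in>P. \<forall>Q\<in>Qs i. Q \<subseteq> P) \<and>
     (\<forall>i\<in>P. \<forall>j\<in>P. \<forall>Qi\<in>Qs i. \<forall>Qj\<in>Qs j.
        \<forall>Fij\<in>downclose (Fs i) \<inter> downclose (Fs j). \<not> (Qi \<inter> Qj \<subseteq> Fij)) \<and>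
     (\<forall>i\<in>P. \<forall>Fi\<in>Fs i. \<exists>Qi\<in>Qs i. Fi \<inter> Qi = {})"

definition correct :: "nat set \<Rightarrow> nat set \<Rightarrow> nat set" where
  "correct P Fa = P - Fa"

definition wise :: "nat set \<Rightarrow> (nat \<Rightarrow> nat set set) \<Rightarrow> nat set \<Rightarrow> nat \<Rightarrow> bool" where
  "wise P Fs Fa i \<longleftrightarrow> i \<in> correct P Fa \<and> Fa \<in> downclose (Fs i)"

definition guild ::
  "nat set \<Rightarrow> (nat \<Rightarrow> nat set set) \<Rightarrow> (nat \<Rightarrow> nat set set) \<Rightarrow> nat set \<Rightarrow> nat set \<Rightarrow> bool" where
  "guild P Fs Qs Fa G \<longleftrightarrow> (\<forall>i\<in>G. wise P Fs Fa i \<and> (\<exists>Q\<in>Qs i. Q \<subseteq> G))"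

definition max_guild ::
  "nat set \<Rightarrow> (nat \<Rightarrow> nat set set) \<Rightarrow> (nat \<Rightarrow> nat set set) \<Rightarrow> nat set \<Rightarrow> nat set" where
  "max_guild P Fs Qs Fa = \<Union> {G. guild P Fs Qs Fa G}"

type_synonym pairs = "(nat \<times> nat) set"

datatype msg = DistributeS pairs | DistributeT pairs

(* Propose i x       : p_i invokes ag-propose(x) (and thereby arb-broadcasts (p_i,x));
   ArbDeliver i j x  : p_i arb-delivers (p_j,x) from p_j;
   Recv i j m        : p_i receives message m from p_j over the authenticated link;
   Idle              : no event at this time step. *)
datatype event = Propose nat nat | ArbDeliver nat nat nat | Recv nat nat msg | Idle

record lstate =
  Sset :: pairs
  Tset :: pairs
  Uset :: pairs
  arb_from :: "nat set"
  dS_from :: "nat set"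
  dT_from :: "nat set"
  sentS :: "pairs option"    (* Some S: DistributeS with content S has been sent to all *)
  sentT :: "pairs option"    (* Some T: DistributeT with content T has been sent to all *)
  agdel :: "pairs option"   (* Some U: ag-deliver(U) has happened *)

definition init_state :: lstate where
  "init_state = \<lparr>Sset = {}, Tset = {}, Uset = {}, arb_from = {}, dS_from = {}, dT_from = {},
                 sentS = None, sentT = None, agdel = None\<rparr>"

(* guarded actions (3), (5), (7), each executed at most once, as soon as enabled *)
definition fire :: "nat set set \<Rightarrow> lstate \<Rightarrow> lstate" where
  "fire Qi st =
     (let st1 = (if sentS st = None \<and> (\<exists>Q\<in>Qi. Q \<subseteq> arb_from st)
                 then st\<lparr>sentS := Some (Sset st)\<rparr> else st);
          st2 = (if sentT st1 = None \<and> (\<exists>Q\<in>Qi. Q \<subseteq> dS_from st1)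
                 then st1\<lparr>sentT := Some (Tset st1)\<rparr> else st1)
      in (if agdel st2 = None \<and> (\<exists>Q\<in>Qi. Q \<subseteq> dT_from st2)
          then st2\<lparr>agdel := Some (Uset st2)\<rparr> else st2))"

fun handle :: "nat \<Rightarrow> event \<Rightarrow> lstate \<Rightarrow> lstate" where
  "handle i (ArbDeliver i' j x) st =
     (if i' = i then st\<lparr>Sset := Sset st \<union> {(j, x)}, arb_from := arb_from st \<union> {j}\<rparr> else st)"
| "handle i (Recv i' j (DistributeS X)) st =
     (if i' = i then st\<lparr>Tset := Tset st \<union> X, dS_from := dS_from st \<union> {j}\<rparr> else st)"
| "handle i (Recv i' j (DistributeT X)) st =
     (if i' = i then st\<lparr>Uset := Uset st \<union> X, dT_from := dT_from st \<union> {j}\<rparr> else st)"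
| "handle i (Propose i' x) st = st"
| "handle i Idle st = st"

(* local state of (correct) process i before the event at time n of trace tr *)
primrec lst :: "(nat \<Rightarrow> nat set set) \<Rightarrow> (nat \<Rightarrow> event) \<Rightarrow> nat \<Rightarrow> nat \<Rightarrow> lstate" where
  "lst Qs tr i 0 = fire (Qs i) init_state"
| "lst Qs tr i (Suc n) = fire (Qs i) (handle i (tr n) (lst Qs tr i n))"

fun ev_procs :: "event \<Rightarrow> nat set" where
  "ev_procs (Propose i x) = {i}"
| "ev_procs (ArbDeliver i j x) = {i, j}"
| "ev_procs (Recv i j m) = {i, j}"
| "ev_procs Idle = {}"

(* An (infinite, fair) execution of NG with faulty set Fa, on top of an
   asymmetric reliable broadcast satisfying its specification. *)
definition ng_execution ::
  "nat set \<Rightarrow> (nat \<Rightarrow> nat set set) \<Rightarrow> (nat \<Rightarrow> nat set set) \<Rightarrow> nat set \<Rightarrow> (nat \<Rightarrow> event) \<Rightarrow> bool" where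
  "ng_execution P Fs Qs Fa tr \<longleftrightarrow>
     (let C = correct P Fa; G = max_guild P Fs Qs Fa in
     Fa \<subseteq> P \<and>
     (\<forall>n. ev_procs (tr n) \<subseteq> P) \<and>
     \<comment> \<open>each correct process invokes ag-propose exactly once\<close>
     (\<forall>i\<in>C. \<exists>!n. \<exists>x. tr n = Propose i x) \<and>
     \<comment> \<open>authenticated links: a message from a correct sender was sent by it\<close>
     (\<forall>n i j X. j \<in> C \<longrightarrow> tr n = Recv i j (DistributeS X) \<longrightarrow> sentS (lst Qs tr j n) = Some X) \<and>
     (\<forall>n i j X. j \<in> C \<longrightarrow> tr n = Recv i j (DistributeT X) \<longrightarrow> sentT (lst Qs tr j n) = Some X) \<and>
     \<comment> \<open>reliable links between correct processes\<close>
     (\<forall>n i j X. i \<in> C \<longrightarrow> j \<in> C \<longrightarrow> sentS (lst Qs tr j n) = Some X \<longrightarrow>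
        (\<exists>m. tr m = Recv i j (DistributeS X))) \<and>
     (\<forall>n i j X. i \<in> C \<longrightarrow> j \<in> C \<longrightarrow> sentT (lst Qs tr j n) = Some X \<longrightarrow>
        (\<exists>m. tr m = Recv i j (DistributeT X))) \<and>
     \<comment> \<open>arb: integrity\<close>
     (\<forall>i\<in>C. \<forall>j n m x y. tr n = ArbDeliver i j x \<longrightarrow> tr m = ArbDeliver i j y \<longrightarrow> n = m) \<and>
     (\<forall>i\<in>C. \<forall>j\<in>C. \<forall>n x. tr n = ArbDeliver i j x \<longrightarrow> (\<exists>m<n. tr m = Propose j x)) \<and>
     \<comment> \<open>arb: validity\<close>
     (\<forall>j\<in>C. \<forall>i\<in>G. \<forall>m x. tr m = Propose j x \<longrightarrow> (\<exists>n. tr n = ArbDeliver i j x)) \<and>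
     \<comment> \<open>arb: consistency\<close>
     (\<forall>i\<in>G. \<forall>k\<in>G. \<forall>j n n' x y. tr n = ArbDeliver i j x \<longrightarrow> tr n' = ArbDeliver k j y \<longrightarrow> x = y) \<and>
     \<comment> \<open>arb: totality\<close>
     (\<forall>i\<in>G. \<forall>k\<in>G. \<forall>j n x. tr n = ArbDeliver i j x \<longrightarrow> (\<exists>n' y. tr n' = ArbDeliver k j y)))"

definition common_core ::
  "nat set \<Rightarrow> (nat \<Rightarrow> nat set set) \<Rightarrow> (nat \<Rightarrow> nat set set) \<Rightarrow> nat set \<Rightarrow> (nat \<Rightarrow> event) \<Rightarrow> bool" where
  "common_core P Fs Qs Fa tr \<longleftrightarrow>
     (\<exists>i\<in>max_guild P Fs Qs Fa. \<exists>Q\<in>Qs i. \<exists>val :: nat \<Rightarrow> nat.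
        (\<forall>j\<in>Q. j \<in> correct P Fa \<longrightarrow> (\<exists>n. tr n = Propose j (val j))) \<and>
        (\<forall>k\<in>max_guild P Fs Qs Fa. \<forall>n U. agdel (lst Qs tr k n) = Some U \<longrightarrow>
            {(j, val j) | j. j \<in> Q} \<subseteq> U))"

end

theory Submission
  imports Defs
begin

(* A single failure-free execution with three processes refutes the property.  Processes 0 and 1
   are wise and form the maximal guild; process 2 is correct but naive (its fail-prone system is
   empty) and its only quorum is the empty set, so it distributes S = T = {} at once.  The quorums
   {0,2} and {1,2} meet in 2, which makes the quorum system consistent.  Process 0 runs all three
   phases on {0,2} before hearing from 1 and ag-delivers {(0,x0),(2,x2)}; symmetrically process 1
   ag-delivers {(1,x1),(2,x2)} via {1,2}.  Every quorum of 0 or 1 contains 0 or 1, whose value is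
   missing from the other delivered set, so no common core exists. *)

lemma handle_keeps_outputs [simp]:
  "sentS (handle i e st) = sentS st" "sentT (handle i e st) = sentT st"
  "agdel (handle i e st) = agdel st"
  by (induction i e st rule: handle.induct) simp_all

lemma fire_outputs [simp]:
  "sentS (fire Qi st) =
     (if sentS st = None \<and> (\<exists>Q\<in>Qi. Q \<subseteq> arb_from st) then Some (Sset st) else sentS st)"
  "sentT (fire Qi st) =
     (if sentT st = None \<and> (\<exists>Q\<in>Qi. Q \<subseteq> dS_from st) then Some (Tset st) else sentT st)"
  "agdel (fire Qi st) =
     (if agdel st = None \<and> (\<exists>Q\<in>Qi. Q \<subseteq> dT_from st) then Some (Uset st) else agdel st)"
  by (simp_all add: fire_def Let_def)

lemma downclose_simps [simp]: "downclose {} = {}" "downclose {{}} = {{}}"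
  by (auto simp: downclose_def)

lemma write_once_stable:
  assumes keep: "\<And>n. out n \<noteq> None \<Longrightarrow> out (Suc n) = out n"
    and "out m = Some y" "m \<le> n"
  shows "out n = Some y"
  using assms(3,2) by (induction n rule: dec_induct) (simp_all add: keep)

lemma write_once_unique:
  assumes keep: "\<And>n. out n \<noteq> None \<Longrightarrow> out (Suc n) = out n"
    and "out m = Some x" "out n = Some y"
  shows "x = y"
  using write_once_stable[of out, OF keep] assms(2,3) by (metis le_cases option.inject)

lemma sentS_lst_stable:
  "sentS (lst Qs tr i m) = Some X \<Longrightarrow> m \<le> n \<Longrightarrow> sentS (lst Qs tr i n) = Some X"
  by (rule write_once_stable[where out = "\<lambda>n. sentS (lst Qs tr i n)"]) auto

lemma sentT_lst_stable:
  "sentT (lst Qs tr i m) = Some X \<Longrightarrow> m \<le> n \<Longrightarrow> sentT (lst Qs tr i n) = Some X"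
  by (rule write_once_stable[where out = "\<lambda>n. sentT (lst Qs tr i n)"]) auto

lemma sentS_lst_unique:
  "sentS (lst Qs tr i m) = Some X \<Longrightarrow> sentS (lst Qs tr i n) = Some Y \<Longrightarrow> X = Y"
  by (rule write_once_unique[where out = "\<lambda>n. sentS (lst Qs tr i n)"]) auto

lemma sentT_lst_unique:
  "sentT (lst Qs tr i m) = Some X \<Longrightarrow> sentT (lst Qs tr i n) = Some Y \<Longrightarrow> X = Y"
  by (rule write_once_unique[where out = "\<lambda>n. sentT (lst Qs tr i n)"]) auto

lemma lst_foldl:
  "lst Qs tr i n =
   foldl (\<lambda>st e. fire (Qs i) (handle i e st)) (fire (Qs i) init_state) (map tr [0..<n])"
  by (induction n) simp_all

definition trace_of :: "event list \<Rightarrow> nat \<Rightarrow> event" where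
  "trace_of es n = (if n < length es then es ! n else Idle)"

lemma map_trace_of_upt: "n \<le> length es \<Longrightarrow> map (trace_of es) [0..<n] = take n es"
  by (simp add: list_eq_iff_nth_eq trace_of_def)

lemma lst_trace_of:
  "n \<le> length es \<Longrightarrow>
   lst Qs (trace_of es) i n =
   foldl (\<lambda>st e. fire (Qs i) (handle i e st)) (fire (Qs i) init_state) (take n es)"
  by (simp add: lst_foldl map_trace_of_upt)

lemma trace_of_eq_in_enumerate:
  "trace_of es n = e \<Longrightarrow> e \<noteq> Idle \<Longrightarrow> (n, e) \<in> set (enumerate 0 es)"
  by (auto simp: trace_of_def in_set_enumerate_eq split: if_splits)

lemma trace_of_cases: "trace_of es n \<in> insert Idle (set es)"
  by (simp add: trace_of_def)

lemma trace_of_occurs: "e \<in> set es \<Longrightarrow> \<exists>n. trace_of es n = e"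
  by (metis in_set_conv_nth trace_of_def)

definition cex_P :: "nat set" where "cex_P = {0, 1, 2}"
definition cex_Fs :: "nat \<Rightarrow> nat set set" where
  "cex_Fs i = (if i \<in> {0, 1} then {{}} else {})"
definition cex_Qs :: "nat \<Rightarrow> nat set set" where
  "cex_Qs i = (if i = 0 then {{0, 2}, {0, 1}} else if i = 1 then {{1, 2}, {0, 1}} else {{}})"

definition cex_sent :: "nat \<Rightarrow> pairs" where
  "cex_sent j = (if j = 0 then {(0, 0), (2, 0)} else if j = 1 then {(1, 0), (2, 0)} else {})"

definition cex_events :: "event list" where
 "cex_events =
  [Propose 0 0, Propose 1 0, Propose 2 0,
   ArbDeliver 0 0 0, ArbDeliver 0 2 0, ArbDeliver 1 1 0, ArbDeliver 1 2 0,
   Recv 0 0 (DistributeS (cex_sent 0)), Recv 0 2 (DistributeS (cex_sent 2)),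
   Recv 1 1 (DistributeS (cex_sent 1)), Recv 1 2 (DistributeS (cex_sent 2)),
   Recv 0 0 (DistributeT (cex_sent 0)), Recv 0 2 (DistributeT (cex_sent 2)),
   Recv 1 1 (DistributeT (cex_sent 1)), Recv 1 2 (DistributeT (cex_sent 2)),
   \<comment> \<open>both deliveries have happened; the rest serves validity and the reliable links\<close>
   ArbDeliver 0 1 0, ArbDeliver 1 0 0,
   Recv 0 1 (DistributeS (cex_sent 1)), Recv 1 0 (DistributeS (cex_sent 0)),
   Recv 2 0 (DistributeS (cex_sent 0)), Recv 2 1 (DistributeS (cex_sent 1)),
   Recv 2 2 (DistributeS (cex_sent 2)),
   Recv 0 1 (DistributeT (cex_sent 1)), Recv 1 0 (DistributeT (cex_sent 0)),
   Recv 2 0 (DistributeT (cex_sent 0)), Recv 2 1 (DistributeT (cex_sent 1)),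
   Recv 2 2 (DistributeT (cex_sent 2))]"

abbreviation cex_trace :: "nat \<Rightarrow> event" where "cex_trace \<equiv> trace_of cex_events"

lemmas cex_run_simps =
  lst_trace_of cex_events_def cex_Qs_def cex_sent_def init_state_def fire_def Let_def insert_commute

lemma cex_sent_at:
  "sentS (lst cex_Qs cex_trace 0 5) = Some (cex_sent 0)"
  "sentS (lst cex_Qs cex_trace 1 7) = Some (cex_sent 1)"
  "sentS (lst cex_Qs cex_trace 2 0) = Some (cex_sent 2)"
  "sentT (lst cex_Qs cex_trace 0 9) = Some (cex_sent 0)"
  "sentT (lst cex_Qs cex_trace 1 11) = Some (cex_sent 1)"
  "sentT (lst cex_Qs cex_trace 2 0) = Some (cex_sent 2)"
  by (simp_all add: cex_run_simps)

lemma cex_agdel: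
  "agdel (lst cex_Qs cex_trace 0 13) = Some (cex_sent 0)"
  "agdel (lst cex_Qs cex_trace 1 15) = Some (cex_sent 1)"
  by (simp_all add: cex_run_simps)

lemma cex_sentS_eq:
  assumes "j \<in> cex_P" "sentS (lst cex_Qs cex_trace j n) = Some X"
  shows "X = cex_sent j"
proof -
  have "j = 0 \<or> j = 1 \<or> j = 2" using assms(1) by (auto simp: cex_P_def)
  then show ?thesis using assms(2) cex_sent_at(1-3) sentS_lst_unique by metis
qed

lemma cex_Recv_DistributeS_sent:
  assumes "cex_trace n = Recv i j (DistributeS X)"
  shows "sentS (lst cex_Qs cex_trace j n) = Some X"
proof -
  have "X = cex_sent j \<and> (j = 0 \<and> 5 \<le> n \<or> j = 1 \<and> 7 \<le> n \<or> j = 2)"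
    using trace_of_eq_in_enumerate[OF assms] by (auto simp: cex_events_def)
  then show ?thesis using cex_sent_at(1-3) sentS_lst_stable by blast
qed

lemma cex_sentT_eq:
  assumes "j \<in> cex_P" "sentT (lst cex_Qs cex_trace j n) = Some X"
  shows "X = cex_sent j"
proof -
  have "j = 0 \<or> j = 1 \<or> j = 2" using assms(1) by (auto simp: cex_P_def)
  then show ?thesis using assms(2) cex_sent_at(4-6) sentT_lst_unique by metis
qed

lemma cex_Recv_DistributeT_sent:
  assumes "cex_trace n = Recv i j (DistributeT X)"
  shows "sentT (lst cex_Qs cex_trace j n) = Some X"
proof -
  have "X = cex_sent j \<and> (j = 0 \<and> 9 \<le> n \<or> j = 1 \<and> 11 \<le> n \<or> j = 2)"
    using trace_of_eq_in_enumerate[OF assms] by (auto simp: cex_events_def)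
  then show ?thesis using cex_sent_at(4-6) sentT_lst_stable by blast
qed

lemma cex_trace_Propose_iff: "cex_trace n = Propose i x \<longleftrightarrow> n = i \<and> i \<in> cex_P \<and> x = 0"
proof
  show "cex_trace n = Propose i x \<Longrightarrow> n = i \<and> i \<in> cex_P \<and> x = 0"
    by (drule trace_of_eq_in_enumerate) (auto simp: cex_events_def cex_P_def)
  show "n = i \<and> i \<in> cex_P \<and> x = 0 \<Longrightarrow> cex_trace n = Propose i x"
    by (auto simp: cex_P_def trace_of_def cex_events_def)
qed

lemma cex_trace_ArbDeliverD:
  "cex_trace n = ArbDeliver i j x \<Longrightarrow>
   (i, j, n) \<in> {(0, 0, 3), (0, 2, 4), (1, 1, 5), (1, 2, 6), (0, 1, 15), (1, 0, 16)} \<and> x = 0"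
  by (drule trace_of_eq_in_enumerate) (auto simp: cex_events_def)

lemma cex_trace_ArbDeliver_unique:
  assumes "cex_trace n = ArbDeliver i j x" "cex_trace m = ArbDeliver i j y"
  shows "n = m"
  using assms[THEN cex_trace_ArbDeliverD] by auto

lemma cex_trace_ArbDeliver_sender:
  assumes "cex_trace n = ArbDeliver i j x"
  shows "j \<in> cex_P"
  using cex_trace_ArbDeliverD[OF assms] by (auto simp: cex_P_def)

lemma cex_trace_ArbDeliver_after_Propose:
  assumes "cex_trace n = ArbDeliver i j x"
  shows "\<exists>m<n. cex_trace m = Propose j x"
proof -
  have "j < n" "j \<in> cex_P" "x = 0"
    using cex_trace_ArbDeliverD[OF assms] cex_trace_ArbDeliver_sender[OF assms] by auto
  then show ?thesis by (auto simp: cex_trace_Propose_iff)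
qed

lemma cex_ev_procs: "ev_procs (cex_trace n) \<subseteq> cex_P"
proof -
  have "cex_trace n \<in> insert Idle (set cex_events)" by (rule trace_of_cases)
  then show ?thesis by (auto simp: cex_events_def cex_P_def)
qed

lemma cex_ArbDeliver_occurs:
  "i \<in> {0, 1} \<Longrightarrow> j \<in> cex_P \<Longrightarrow> \<exists>n. cex_trace n = ArbDeliver i j 0"
  by (rule trace_of_occurs) (auto simp: cex_P_def cex_events_def)

lemma cex_Recv_occurs:
  assumes "i \<in> cex_P" "j \<in> cex_P"
  shows "\<exists>n. cex_trace n = Recv i j (DistributeS (cex_sent j))"
    and "\<exists>n. cex_trace n = Recv i j (DistributeT (cex_sent j))"
  using assms by (auto simp: cex_P_def cex_events_def intro!: trace_of_occurs)

lemma cex_fail_prone: "fail_prone cex_P cex_Fs"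
  by (simp add: fail_prone_def cex_Fs_def)

lemma cex_byz_quorum_system: "byz_quorum_system cex_P cex_Fs cex_Qs"
  by (auto simp: byz_quorum_system_def cex_P_def cex_Fs_def cex_Qs_def)

lemma cex_max_guild: "max_guild cex_P cex_Fs cex_Qs {} = {0, 1}"
proof -
  have wise: "wise cex_P cex_Fs {} i \<longleftrightarrow> i \<in> {0, 1}" for i
    by (auto simp: wise_def correct_def cex_P_def cex_Fs_def)
  have "max_guild cex_P cex_Fs cex_Qs {} \<subseteq> {0, 1}"
    unfolding max_guild_def guild_def wise by blast
  moreover have "guild cex_P cex_Fs cex_Qs {} {0, 1}"
    by (auto simp: guild_def wise cex_Qs_def)
  then have "{0, 1} \<subseteq> max_guild cex_P cex_Fs cex_Qs {}"
    unfolding max_guild_def by blast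
  ultimately show ?thesis by blast
qed

lemma cex_ng_execution: "ng_execution cex_P cex_Fs cex_Qs {} cex_trace"
  unfolding ng_execution_def Let_def cex_max_guild correct_def Diff_empty
proof (intro conjI)
  show "\<forall>n. ev_procs (cex_trace n) \<subseteq> cex_P"
    using cex_ev_procs by blast
  show "\<forall>i\<in>cex_P. \<exists>!n. \<exists>x. cex_trace n = Propose i x"
    by (auto simp: cex_trace_Propose_iff)
  show "\<forall>n i j X. j \<in> cex_P \<longrightarrow> cex_trace n = Recv i j (DistributeS X) \<longrightarrow>
          sentS (lst cex_Qs cex_trace j n) = Some X"
    using cex_Recv_DistributeS_sent by blast
  show "\<forall>n i j X. j \<in> cex_P \<longrightarrow> cex_trace n = Recv i j (DistributeT X) \<longrightarrow>
          sentT (lst cex_Qs cex_trace j n) = Some X"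
    using cex_Recv_DistributeT_sent by blast
  show "\<forall>n i j X. i \<in> cex_P \<longrightarrow> j \<in> cex_P \<longrightarrow> sentS (lst cex_Qs cex_trace j n) = Some X \<longrightarrow>
          (\<exists>m. cex_trace m = Recv i j (DistributeS X))"
    using cex_sentS_eq cex_Recv_occurs(1) by blast
  show "\<forall>n i j X. i \<in> cex_P \<longrightarrow> j \<in> cex_P \<longrightarrow> sentT (lst cex_Qs cex_trace j n) = Some X \<longrightarrow>
          (\<exists>m. cex_trace m = Recv i j (DistributeT X))"
    using cex_sentT_eq cex_Recv_occurs(2) by blast
  show "\<forall>i\<in>cex_P. \<forall>j n m x y.
          cex_trace n = ArbDeliver i j x \<longrightarrow> cex_trace m = ArbDeliver i j y \<longrightarrow> n = m"
    using cex_trace_ArbDeliver_unique by blast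
  show "\<forall>i\<in>cex_P. \<forall>j\<in>cex_P. \<forall>n x. cex_trace n = ArbDeliver i j x \<longrightarrow>
          (\<exists>m<n. cex_trace m = Propose j x)"
    using cex_trace_ArbDeliver_after_Propose by blast
  show "\<forall>j\<in>cex_P. \<forall>i\<in>{0, 1}. \<forall>m x. cex_trace m = Propose j x \<longrightarrow>
          (\<exists>n. cex_trace n = ArbDeliver i j x)"
    using cex_ArbDeliver_occurs by (auto simp: cex_trace_Propose_iff)
  show "\<forall>i\<in>{0, 1}. \<forall>k\<in>{0, 1}. \<forall>j n n' x y.
          cex_trace n = ArbDeliver i j x \<longrightarrow> cex_trace n' = ArbDeliver k j y \<longrightarrow> x = y"
    using cex_trace_ArbDeliverD by blast
  show "\<forall>i\<in>{0, 1}. \<forall>k\<in>{0, 1}. \<forall>j n x. cex_trace n = ArbDeliver i j x \<longrightarrow>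
          (\<exists>n' y. cex_trace n' = ArbDeliver k j y)"
    using cex_trace_ArbDeliver_sender cex_ArbDeliver_occurs by blast
qed simp

lemma cex_not_common_core: "\<not> common_core cex_P cex_Fs cex_Qs {} cex_trace"
proof
  assume "common_core cex_P cex_Fs cex_Qs {} cex_trace"
  then obtain i Q val where "i \<in> {0, 1}" "Q \<in> cex_Qs i"
    and core: "\<forall>k\<in>{0, 1}. \<forall>n U. agdel (lst cex_Qs cex_trace k n) = Some U \<longrightarrow>
      {(j, val j) | j. j \<in> Q} \<subseteq> U"
    unfolding common_core_def cex_max_guild by blast
  have "{(j, val j) | j. j \<in> Q} \<subseteq> cex_sent 0" "{(j, val j) | j. j \<in> Q} \<subseteq> cex_sent 1"
    using core cex_agdel by blast+
  moreover have "0 \<in> Q \<or> 1 \<in> Q"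
    using \<open>i \<in> {0, 1}\<close> \<open>Q \<in> cex_Qs i\<close> by (auto simp: cex_Qs_def)
  ultimately show False by (auto simp: cex_sent_def)
qed

theorem lemma3p2:
  shows "\<not> (\<forall>(P :: nat set) Fs Qs Fa tr.
            finite P \<and> fail_prone P Fs \<and> byz_quorum_system P Fs Qs \<and>
            ng_execution P Fs Qs Fa tr \<and> max_guild P Fs Qs Fa \<noteq> {}
            \<longrightarrow> common_core P Fs Qs Fa tr)"
proof
  assume "\<forall>(P :: nat set) Fs Qs Fa tr.
            finite P \<and> fail_prone P Fs \<and> byz_quorum_system P Fs Qs \<and>
            ng_execution P Fs Qs Fa tr \<and> max_guild P Fs Qs Fa \<noteq> {}
            \<longrightarrow> common_core P Fs Qs Fa tr"
  then have "common_core cex_P cex_Fs cex_Qs {} cex_trace"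
    using cex_fail_prone cex_byz_quorum_system cex_ng_execution cex_max_guild by (auto simp: cex_P_def)
  with cex_not_common_core show False ..
qed

end
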